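(* Consider algorithm TRIEST-IMPR (described in the context) run with integer parameter $M\ge 6$ on an insertion-only edge stream. Then $\tau^{(t)}=|\Delta^{(t)}|$ if $t\le M$, and $\mathbb{E}\left[\tau^{(t)}\right]=|\Delta^{(t)}|$ if $t>M$.
   Context: An insertion-only edge stream: at each time step $t=1,2,\dots$ an edge $e_t=\{u,v\}$ between two distinct vertices arrives, which is not already present; $G^{(t)}=(V^{(t)},E^{(t)})$ with $E^{(t)}=\{e_1,\dots,e_t\}$. A triangle in $G^{(t)}$ is a set of three edges $\{\{u,v\},\{v,w\},\{w,u\}\}\subseteq E^{(t)}$ with $u,v,w$ distinct; $\Delta^{(t)}$ is the set of all triangles of $G^{(t)}$. TRIEST-IMPR maintains an edge sample $\mathcal{S}$ (initially empty) and a counter $\tau$ (initially $0$). At time $t$, when $e_t=\{u,v\}$ arrives: first, $\tau$ is increased by $\eta^{(t)}\cdot|\mathcal{N}^{\mathcal{S}}_{u,v}|$, where $\eta^{(t)}=\max\{1,(t-1)(t-2)/(M(M-1))\}$ and $|\mathcal{N}^{\mathcal{S}}_{u,v}|$ is the number of vertices $c$ with both $\{c,u\}$ and $\{c,v\}$ in the current $\mathcal{S}$; then $\mathcal{S}$ is updated by reservoir sampling: if $t\le M$, $e_t$ is inserted into $\mathcal{S}$; if $t>M$, with probability $M/t$ an edge chosen uniformly at random from $\mathcal{S}$ is removed and $e_t$ is inserted, otherwise $\mathcal{S}$ is unchanged. The counter is never decreased. $\tau^{(t)}$ is the value of $\tau$ at the end of time step $t$, and is the algorithm's estimate of $|\Delta^{(t)}|$.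 *)

theory Defs
  imports "HOL-Probability.Probability"
begin

text \<open>An edge stream is a function e :: nat => 'a * 'a; the edge arriving at time t (t >= 1)
  is the unordered pair {fst (e t), snd (e t)}.\<close>

definition edge_at :: "(nat \<Rightarrow> 'a \<times> 'a) \<Rightarrow> nat \<Rightarrow> 'a set" where
  "edge_at e t = {fst (e t), snd (e t)}"

definition valid_stream :: "(nat \<Rightarrow> 'a \<times> 'a) \<Rightarrow> bool" where
  "valid_stream e \<longleftrightarrow> (\<forall>t\<ge>1. fst (e t) \<noteq> snd (e t)) \<and>
     (\<forall>s t. 1 \<le> s \<longrightarrow> s < t \<longrightarrow> edge_at e s \<noteq> edge_at e t)"

definition edges_upto :: "(nat \<Rightarrow> 'a \<times> 'a) \<Rightarrow> nat \<Rightarrow> 'a set set" where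
  "edges_upto e t = edge_at e ` {1..t}"

definition triangles :: "'a set set \<Rightarrow> 'a set set set" where
  "triangles E = {T. \<exists>u v w. u \<noteq> v \<and> v \<noteq> w \<and> w \<noteq> u \<and>
                        T = {{u, v}, {v, w}, {w, u}} \<and> T \<subseteq> E}"

definition eta :: "nat \<Rightarrow> nat \<Rightarrow> real" where
  "eta M t = max 1 ((real t - 1) * (real t - 2) / (real M * (real M - 1)))"

definition common_nbrs :: "'a set set \<Rightarrow> 'a \<Rightarrow> 'a \<Rightarrow> 'a set" where
  "common_nbrs S u v = {c. {c, u} \<in> S \<and> {c, v} \<in> S}"

definition reservoir :: "nat \<Rightarrow> nat \<Rightarrow> 'a set \<Rightarrow> 'a set set \<Rightarrow> 'a set set pmf" where
  "reservoir M t ed S =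
     (if t \<le> M then return_pmf (insert ed S)
      else bernoulli_pmf (real M / real t) \<bind>
             (\<lambda>b. if b then map_pmf (\<lambda>f. insert ed (S - {f})) (pmf_of_set S)
                  else return_pmf S))"

text \<open>One step of TRIEST-IMPR at time t; the state is (sample S, counter tau).\<close>
definition triest_step :: "nat \<Rightarrow> nat \<Rightarrow> 'a \<times> 'a \<Rightarrow> 'a set set \<times> real \<Rightarrow> ('a set set \<times> real) pmf" where
  "triest_step M t uv st =
     (let S = fst st; u = fst uv; v = snd uv;
          tau' = snd st + eta M t * real (card (common_nbrs S u v))
      in map_pmf (\<lambda>S'. (S', tau')) (reservoir M t {u, v} S))"

fun triest_impr :: "nat \<Rightarrow> (nat \<Rightarrow> 'a \<times> 'a) \<Rightarrow> nat \<Rightarrow> ('a set set \<times> real) pmf" where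
  "triest_impr M e 0 = return_pmf ({}, 0)"
| "triest_impr M e (Suc t) = triest_impr M e t \<bind> triest_step M (Suc t) (e (Suc t))"

end

theory Submission
  imports Defs
begin

text \<open>The sample of TRIEST-IMPR evolves as a plain reservoir sample of the edge stream, whatever
  the counter does. In a reservoir sample of size M taken from t distinct items, a fixed set of k
  items is contained in the sample with probability C(min M t, k) / C(t, k). When the edge {u, v}
  arrives at time t + 1, every common neighbour c of u and v in G^(t) contributes to the increment
  of the counter exactly when both wedge edges {c, u} and {c, v} are sampled, which happens with
  probability C(min M t, 2) / C(t, 2) = 1 / eta^(t+1). Hence the expected increment is the number
  of common neighbours, i.e. the number of triangles closed by the new edge, and summing over the
  stream gives E[tau^(t)] = |Delta^(t)|. As long as t \<le> M the reservoir keeps every edge and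
  eta = 1, so the same count holds for every outcome.\<close>

lemma measure_bind_pmf:
  "measure_pmf.prob (p \<bind> f) X = measure_pmf.expectation p (\<lambda>x. measure_pmf.prob (f x) X)"
proof -
  have "ennreal (measure_pmf.prob (p \<bind> f) X)
      = (\<integral>\<^sup>+x. ennreal (measure_pmf.prob (f x) X) \<partial>p)"
    using emeasure_bind_pmf[of p f X] by (simp add: measure_pmf.emeasure_eq_measure)
  also have "\<dots> = ennreal (measure_pmf.expectation p (\<lambda>x. measure_pmf.prob (f x) X))"
    by (intro nn_integral_eq_integral measure_pmf.integrable_const_bound[where B=1]) auto
  finally show ?thesis by (simp add: measure_nonneg integral_nonneg_AE)
qed

lemma expectation_pmf_cong:
  fixes f g :: "'b \<Rightarrow> real"
  assumes "\<And>x. x \<in> set_pmf p \<Longrightarrow> f x = g x"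
  shows "measure_pmf.expectation p f = measure_pmf.expectation p g"
  using assms by (intro integral_cong_AE) (auto simp: AE_measure_pmf_iff)

lemma binomial_ratio_Suc:
  assumes "k \<le> t"
  shows "(1 - real k / real (Suc t)) * (real (m choose k) / real (t choose k))
       = real (m choose k) / real (Suc t choose k)"
proof -
  have "real (Suc t - k) * real (Suc t choose k) = real (Suc t) * real (t choose k)"
    using binomial_absorb_comp[of "Suc t" k] by (metis diff_Suc_1 of_nat_mult)
  moreover have "real (Suc t - k) = real (Suc t) - real k" using assms by simp
  moreover have "(Suc t choose k) > 0" using assms by simp
  ultimately have "1 - real k / real (Suc t) = real (t choose k) / real (Suc t choose k)"
    by (simp add: field_simps)
  moreover have "(t choose k) > 0" using assms by simp
  ultimately show ?thesis by simp
qed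

lemma binomial_ratio_Suc_Suc:
  assumes "j \<le> t"
  shows "(real m - real j) / real (Suc t) * (real (m choose j) / real (t choose j))
       = real (m choose Suc j) / real (Suc t choose Suc j)"
proof -
  have m: "(real m - real j) * real (m choose j) = real (Suc j) * real (m choose Suc j)"
  proof (cases "j \<le> m")
    case True
    have "(m - j) * (m choose j) = Suc j * (m choose Suc j)"
      using binomial_absorb_comp[of m j] binomial_absorption[of j m] by simp
    then show ?thesis using True by (metis of_nat_diff of_nat_mult)
  qed (simp add: binomial_eq_0)
  have t: "real (Suc j) * real (Suc t choose Suc j) = real (Suc t) * real (t choose j)"
    using Suc_times_binomial[of j t] by (metis of_nat_mult)
  have "(real m - real j) / real (Suc t) * (real (m choose j) / real (t choose j))
      = real (Suc j) * real (m choose Suc j) / (real (Suc j) * real (Suc t choose Suc j))"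
    by (simp only: times_divide_times_eq m t[symmetric])
  then show ?thesis by (simp del: binomial_Suc_Suc)
qed

lemma real_choose_two: "real (n choose 2) = real n * (real n - 1) / 2"
proof -
  have "2 * (n choose 2) = n * (n - 1)"
    using binomial_absorption[of 1 n] by (simp add: numeral_2_eq_2)
  then have "2 * real (n choose 2) = real n * real (n - 1)"
    by (metis of_nat_mult of_nat_numeral)
  then show ?thesis by (cases n) auto
qed

lemma reservoir_le: "n \<le> M \<Longrightarrow> reservoir M n ed S = return_pmf (insert ed S)"
  by (simp add: reservoir_def)

lemma set_pmf_reservoir_subset: "T \<in> set_pmf (reservoir M n ed S) \<Longrightarrow> T \<subseteq> insert ed S"
  by (auto simp: reservoir_def split: if_splits)

lemma set_pmf_reservoir_gt:
  assumes "M < n" "finite S" "S \<noteq> {}"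
  shows "set_pmf (reservoir M n ed S) \<subseteq> insert S ((\<lambda>f. insert ed (S - {f})) ` S)"
proof -
  have "set_pmf (if b then map_pmf (\<lambda>f. insert ed (S - {f})) (pmf_of_set S) else return_pmf S)
      \<subseteq> insert S ((\<lambda>f. insert ed (S - {f})) ` S)" for b
    using assms by auto
  then show ?thesis using assms(1) by (auto simp: reservoir_def)
qed

lemma prob_reservoir_superset:
  assumes "M < n" "0 < M" "finite S" "card S = M" "ed \<notin> S"
  shows "measure_pmf.prob (reservoir M n ed S) {S'. A \<subseteq> S'} =
    (if ed \<in> A then (if A - {ed} \<subseteq> S then (real M - real (card (A - {ed}))) / real n else 0)
     else if A \<subseteq> S then 1 - real (card A) / real n else 0)"
proof -
  let ?q = "real M / real n"
  have "S \<noteq> {}" using assms by auto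
  have replaced: "S \<inter> {f. A \<subseteq> insert ed (S - {f})} =
      (if A - {ed} \<subseteq> S then S - (A - {ed}) else {})"
    using assms(5) by auto
  have prob: "measure_pmf.prob (reservoir M n ed S) {S'. A \<subseteq> S'} =
      ?q * (if A - {ed} \<subseteq> S then real (card (S - (A - {ed}))) / real M else 0)
      + (1 - ?q) * (if A \<subseteq> S then 1 else 0)"
    using assms \<open>S \<noteq> {}\<close>
    by (simp add: reservoir_def measure_bind_pmf measure_pmf_of_set replaced)
  show ?thesis
  proof (cases "A - {ed} \<subseteq> S")
    case True
    have "finite (A - {ed})" using True assms(3) finite_subset by blast
    moreover have "card (A - {ed}) \<le> M" using True assms(3,4) card_mono by blast
    ultimately have card: "real (card (S - (A - {ed}))) = real M - real (card (A - {ed}))"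
      using True assms(4) by (simp add: card_Diff_subset of_nat_diff)
    show ?thesis
    proof (cases "ed \<in> A")
      case True
      then have "\<not> A \<subseteq> S" using assms(5) by blast
      then show ?thesis using True \<open>A - {ed} \<subseteq> S\<close> assms(2) by (simp add: prob card)
    next
      case False
      then have "A - {ed} = A" by simp
      moreover have "?q * ((real M - real (card A)) / real M) = (real M - real (card A)) / real n"
        using assms(2) by simp
      ultimately show ?thesis
        unfolding prob using False card \<open>A - {ed} \<subseteq> S\<close> by (simp add: diff_divide_distrib)
    qed
  next
    case False
    then show ?thesis using prob by auto
  qed
qed

fun reservoir_sample :: "nat \<Rightarrow> (nat \<Rightarrow> 'a set) \<Rightarrow> nat \<Rightarrow> 'a set set pmf" where
  "reservoir_sample M x 0 = return_pmf {}"
| "reservoir_sample M x (Suc t) = reservoir_sample M x t \<bind> reservoir M (Suc t) (x (Suc t))"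

lemma inj_on_last_notin_image: "inj_on x {1..Suc t} \<Longrightarrow> x (Suc t) \<notin> x ` {1..t}"
  by (subst inj_on_image_mem_iff) auto

lemma reservoir_sample_subset: "S \<in> set_pmf (reservoir_sample M x t) \<Longrightarrow> S \<subseteq> x ` {1..t}"
  by (induction t arbitrary: S)
     (auto simp: atLeastAtMostSuc_conv dest!: set_pmf_reservoir_subset)

lemma finite_set_pmf_reservoir_sample: "finite (set_pmf (reservoir_sample M x t))"
proof (rule finite_subset)
  show "set_pmf (reservoir_sample M x t) \<subseteq> Pow (x ` {1..t})"
    using reservoir_sample_subset by blast
qed simp

lemma reservoir_sample_le: "t \<le> M \<Longrightarrow> reservoir_sample M x t = return_pmf (x ` {1..t})"
  by (induction t) (simp_all add: reservoir_le bind_return_pmf atLeastAtMostSuc_conv)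

lemma card_reservoir_sample:
  assumes "0 < M" "inj_on x {1..t}" "S \<in> set_pmf (reservoir_sample M x t)"
  shows "card S = min t M"
  using assms(2,3)
proof (induction t arbitrary: S)
  case 0
  then show ?case by simp
next
  case (Suc t)
  obtain S0 where S0: "S0 \<in> set_pmf (reservoir_sample M x t)"
    and S: "S \<in> set_pmf (reservoir M (Suc t) (x (Suc t)) S0)" using Suc.prems(2) by auto
  have "inj_on x {1..t}" using Suc.prems(1) by (rule inj_on_subset) auto
  then have card_S0: "card S0 = min t M" using Suc.IH S0 by blast
  have fin: "finite S0" using S0 finite_subset[OF reservoir_sample_subset] by blast
  have new: "x (Suc t) \<notin> S0"
    using inj_on_last_notin_image[OF Suc.prems(1)] reservoir_sample_subset[OF S0] by blast
  show ?case
  proof (cases "Suc t \<le> M")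
    case True
    then show ?thesis using S card_S0 fin new by (simp add: reservoir_le)
  next
    case False
    then have "card S0 = M" "S0 \<noteq> {}" using card_S0 assms(1) by auto
    then have "S \<in> insert S0 ((\<lambda>f. insert (x (Suc t)) (S0 - {f})) ` S0)"
      using set_pmf_reservoir_gt[of M "Suc t" S0] S False fin by force
    then show ?thesis
      using \<open>card S0 = M\<close> False fin new assms(1) by (auto simp: card_Diff_singleton)
  qed
qed

lemma prob_reservoir_sample_Suc_superset:
  assumes "0 < M" "M \<le> t" "inj_on x {1..Suc t}"
  shows "measure_pmf.prob (reservoir_sample M x (Suc t)) {S. A \<subseteq> S} =
    (if x (Suc t) \<in> A
     then (real M - real (card (A - {x (Suc t)}))) / real (Suc t)
            * measure_pmf.prob (reservoir_sample M x t) {S. A - {x (Suc t)} \<subseteq> S}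
     else (1 - real (card A) / real (Suc t)) * measure_pmf.prob (reservoir_sample M x t) {S. A \<subseteq> S})"
proof -
  let ?new = "x (Suc t)"
  have inj: "inj_on x {1..t}" using assms(3) by (rule inj_on_subset) auto
  have sample: "finite S" "card S = M" "?new \<notin> S" if "S \<in> set_pmf (reservoir_sample M x t)" for S
    using that card_reservoir_sample[OF assms(1) inj] assms(2) reservoir_sample_subset[OF that]
      inj_on_last_notin_image[OF assms(3)] finite_subset[OF reservoir_sample_subset[OF that]]
    by auto
  have "measure_pmf.prob (reservoir_sample M x (Suc t)) {S. A \<subseteq> S} =
      measure_pmf.expectation (reservoir_sample M x t)
        (\<lambda>S. measure_pmf.prob (reservoir M (Suc t) ?new S) {S'. A \<subseteq> S'})"
    by (simp add: measure_bind_pmf)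
  also have "\<dots> = measure_pmf.expectation (reservoir_sample M x t)
      (\<lambda>S. if ?new \<in> A
           then (real M - real (card (A - {?new}))) / real (Suc t) * indicator {S. A - {?new} \<subseteq> S} S
           else (1 - real (card A) / real (Suc t)) * indicator {S. A \<subseteq> S} S)"
    using assms(1,2) by (intro expectation_pmf_cong) (simp add: prob_reservoir_superset sample)
  finally show ?thesis by (cases "?new \<in> A") simp_all
qed

lemma prob_reservoir_sample_superset:
  assumes "0 < M" "inj_on x {1..t}" "A \<subseteq> x ` {1..t}"
  shows "measure_pmf.prob (reservoir_sample M x t) {S. A \<subseteq> S}
       = real (min M t choose card A) / real (t choose card A)"
  using assms(2,3)
proof (induction t arbitrary: A)
  case 0
  then show ?case by simp
next
  case (Suc t)
  have card_le: "card B \<le> n" if "B \<subseteq> x ` {1..n}" for B n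
    using card_mono[OF _ that] card_image_le[of "{1..n}" x] by fastforce
  have inj: "inj_on x {1..t}" using Suc.prems(1) by (rule inj_on_subset) auto
  show ?case
  proof (cases "Suc t \<le> M")
    case True
    then show ?thesis
      unfolding reservoir_sample_le[OF True] using Suc.prems(2) card_le[OF Suc.prems(2)] by simp
  next
    case False
    note recurrence = prob_reservoir_sample_Suc_superset[OF assms(1) _ Suc.prems(1)]
    show ?thesis
    proof (cases "x (Suc t) \<in> A")
      case False
      then have A: "A \<subseteq> x ` {1..t}" using Suc.prems(2) by (auto simp: atLeastAtMostSuc_conv)
      show ?thesis
        using recurrence Suc.IH[OF inj A] binomial_ratio_Suc[OF card_le[OF A]] False \<open>\<not> Suc t \<le> M\<close>
        by simp
    next
      case True
      define A' where "A' = A - {x (Suc t)}"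
      have A': "A' \<subseteq> x ` {1..t}" using Suc.prems(2) by (auto simp: A'_def atLeastAtMostSuc_conv)
      have "finite A" using Suc.prems(2) finite_subset by blast
      then have "card A = Suc (card A')"
        unfolding A'_def by (rule card_Suc_Diff1[OF _ True, symmetric])
      then show ?thesis
        using recurrence Suc.IH[OF inj A'] binomial_ratio_Suc_Suc[OF card_le[OF A']] True
          \<open>\<not> Suc t \<le> M\<close>
        by (simp add: A'_def[symmetric] del: binomial_Suc_Suc)
    qed
  qed
qed

lemma finite_common_nbrs: "finite E \<Longrightarrow> finite (common_nbrs E u v)"
proof -
  assume "finite E"
  moreover have "inj (\<lambda>c. {c, u})" by (auto intro!: injI simp: doubleton_eq_iff)
  ultimately have "finite ((\<lambda>c. {c, u}) -` E)" by (rule finite_vimageI)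
  then show ?thesis by (rule finite_subset[rotated]) (auto simp: common_nbrs_def)
qed

lemma expectation_card_common_nbrs_reservoir_sample:
  assumes "0 < M" "inj_on x {1..t}" "u \<noteq> v"
  shows "measure_pmf.expectation (reservoir_sample M x t) (\<lambda>S. real (card (common_nbrs S u v)))
       = real (card (common_nbrs (x ` {1..t}) u v)) * (real (min M t choose 2) / real (t choose 2))"
proof -
  define C where "C = common_nbrs (x ` {1..t}) u v"
  let ?wedge = "\<lambda>c. {{c, u}, {c, v}}"
  have "finite C" unfolding C_def by (simp add: finite_common_nbrs)
  have "measure_pmf.expectation (reservoir_sample M x t) (\<lambda>S. real (card (common_nbrs S u v)))
      = measure_pmf.expectation (reservoir_sample M x t)
          (\<lambda>S. \<Sum>c\<in>C. indicator {S. ?wedge c \<subseteq> S} S)"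
  proof (rule expectation_pmf_cong)
    fix S assume "S \<in> set_pmf (reservoir_sample M x t)"
    then have "common_nbrs S u v = {c \<in> C. ?wedge c \<subseteq> S}"
      using reservoir_sample_subset unfolding C_def common_nbrs_def by blast
    then have "real (card (common_nbrs S u v)) = (\<Sum>c\<in>{c \<in> C. ?wedge c \<subseteq> S}. 1)" by simp
    also have "\<dots> = (\<Sum>c\<in>C. if ?wedge c \<subseteq> S then 1 else 0)"
      by (rule sum.inter_filter[OF \<open>finite C\<close>])
    finally show "real (card (common_nbrs S u v)) = (\<Sum>c\<in>C. indicator {S. ?wedge c \<subseteq> S} S)"
      by (simp add: indicator_def of_bool_def)
  qed
  also have "\<dots> = (\<Sum>c\<in>C. measure_pmf.prob (reservoir_sample M x t) {S. ?wedge c \<subseteq> S})"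
    by (subst Bochner_Integration.integral_sum)
       (auto intro: integrable_measure_pmf_finite finite_set_pmf_reservoir_sample)
  also have "\<dots> = (\<Sum>c\<in>C. real (min M t choose 2) / real (t choose 2))"
  proof (rule sum.cong)
    fix c assume "c \<in> C"
    then have "?wedge c \<subseteq> x ` {1..t}" unfolding C_def common_nbrs_def by blast
    moreover have "card (?wedge c) = 2" using assms(3) by (auto simp: doubleton_eq_iff)
    ultimately show "measure_pmf.prob (reservoir_sample M x t) {S. ?wedge c \<subseteq> S}
        = real (min M t choose 2) / real (t choose 2)"
      using prob_reservoir_sample_superset[OF assms(1,2)] by metis
  qed simp
  finally show ?thesis unfolding C_def by simp
qed

lemma common_nbrs_loopless:
  assumes "\<And>a. {a} \<notin> E" "c \<in> common_nbrs E u v"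
  shows "c \<noteq> u" "c \<noteq> v"
  using assms by (auto simp: common_nbrs_def)

lemma triangle_through_edge:
  assumes "a \<noteq> b" "b \<noteq> w" "w \<noteq> a" "{u, v} \<in> {{a, b}, {b, w}, {w, a}}"
  obtains c where "{{a, b}, {b, w}, {w, a}} = {{u, v}, {v, c}, {c, u}}" "c \<noteq> u" "c \<noteq> v"
proof -
  consider "{u, v} = {a, b}" | "{u, v} = {b, w}" | "{u, v} = {w, a}" using assms(4) by blast
  then show thesis
  proof cases
    case 1
    then show thesis using that[of w] assms(1-3) by (auto simp: doubleton_eq_iff insert_commute)
  next
    case 2
    then show thesis using that[of a] assms(1-3) by (auto simp: doubleton_eq_iff insert_commute)
  next
    case 3
    then show thesis using that[of b] assms(1-3) by (auto simp: doubleton_eq_iff insert_commute)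
  qed
qed

lemma triangleI:
  "\<lbrakk>a \<noteq> b; b \<noteq> w; w \<noteq> a; T = {{a, b}, {b, w}, {w, a}}; T \<subseteq> E\<rbrakk> \<Longrightarrow> T \<in> triangles E"
  unfolding triangles_def by blast

lemma triangleE:
  assumes "T \<in> triangles E"
  obtains a b w where "a \<noteq> b" "b \<noteq> w" "w \<noteq> a" "T = {{a, b}, {b, w}, {w, a}}" "T \<subseteq> E"
  using assms unfolding triangles_def mem_Collect_eq by (elim exE conjE)

lemma triangles_subset: "T \<in> triangles E \<Longrightarrow> T \<subseteq> E"
  by (erule triangleE)

lemma triangles_mono: "E \<subseteq> E' \<Longrightarrow> triangles E \<subseteq> triangles E'"
proof
  fix T assume "E \<subseteq> E'" "T \<in> triangles E"
  then show "T \<in> triangles E'" by (elim triangleE) (rule triangleI, assumption+, blast)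
qed

lemma triangles_empty: "triangles {} = {}"
  by (auto elim: triangleE)

lemma triangles_insert_edge:
  assumes "u \<noteq> v" "\<And>a. {a} \<notin> E"
  shows "triangles (insert {u, v} E)
       = triangles E \<union> (\<lambda>c. {{u, v}, {v, c}, {c, u}}) ` common_nbrs E u v"
proof (intro equalityI subsetI)
  fix T assume "T \<in> triangles (insert {u, v} E)"
  then obtain a b w where abw: "a \<noteq> b" "b \<noteq> w" "w \<noteq> a" "T = {{a, b}, {b, w}, {w, a}}"
    and T: "T \<subseteq> insert {u, v} E" by (rule triangleE)
  show "T \<in> triangles E \<union> (\<lambda>c. {{u, v}, {v, c}, {c, u}}) ` common_nbrs E u v"
  proof (cases "{u, v} \<in> T")
    case False
    then have "T \<subseteq> E" using T by blast
    then have "T \<in> triangles E" by (rule triangleI[OF abw])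
    then show ?thesis by (rule UnI1)
  next
    case True
    obtain c where "{{a, b}, {b, w}, {w, a}} = {{u, v}, {v, c}, {c, u}}" and c: "c \<noteq> u" "c \<noteq> v"
      by (rule triangle_through_edge[OF abw(1-3) True[unfolded abw(4)]])
    then have Tc: "T = {{u, v}, {v, c}, {c, u}}" using abw(4) by simp
    have "{v, c} \<noteq> {u, v}" "{c, u} \<noteq> {u, v}" using assms(1) c by (auto simp: doubleton_eq_iff)
    moreover have "{v, c} \<in> T" "{c, u} \<in> T" unfolding Tc by simp_all
    ultimately have "{v, c} \<in> E" "{c, u} \<in> E" using T by blast+
    then have "c \<in> common_nbrs E u v" by (simp add: common_nbrs_def insert_commute)
    then show ?thesis unfolding Tc by (intro UnI2 imageI)
  qed
next
  fix T assume "T \<in> triangles E \<union> (\<lambda>c. {{u, v}, {v, c}, {c, u}}) ` common_nbrs E u v"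
  then show "T \<in> triangles (insert {u, v} E)"
  proof
    assume "T \<in> triangles E"
    then show ?thesis using triangles_mono[of E "insert {u, v} E"] by blast
  next
    assume "T \<in> (\<lambda>c. {{u, v}, {v, c}, {c, u}}) ` common_nbrs E u v"
    then obtain c where c: "c \<in> common_nbrs E u v" and Tc: "T = {{u, v}, {v, c}, {c, u}}" by blast
    have "{v, c} \<in> E" "{c, u} \<in> E" using c by (simp_all add: common_nbrs_def insert_commute)
    moreover have "c \<noteq> u" "c \<noteq> v" using common_nbrs_loopless[OF assms(2) c] by simp_all
    ultimately show ?thesis using assms(1) by (intro triangleI[OF _ _ _ Tc]) (auto simp: Tc)
  qed
qed

lemma card_triangles_insert_edge:
  assumes "finite E" "{u, v} \<notin> E" "u \<noteq> v" "\<And>a. {a} \<notin> E"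
  shows "card (triangles (insert {u, v} E)) = card (triangles E) + card (common_nbrs E u v)"
proof -
  let ?T = "\<lambda>c. {{u, v}, {v, c}, {c, u}}"
  have "finite (triangles E)"
    by (rule finite_subset[of _ "Pow E"]) (use assms(1) triangles_subset in auto)
  moreover have "triangles E \<inter> ?T ` common_nbrs E u v = {}"
    using assms(2) by (auto dest: triangles_subset)
  moreover have "inj_on ?T (common_nbrs E u v)"
  proof
    fix c c' assume c: "c \<in> common_nbrs E u v" "c' \<in> common_nbrs E u v" "?T c = ?T c'"
    have "{v, c} \<in> ?T c" by simp
    then have "{v, c} \<in> ?T c'" unfolding c(3) .
    then show "c = c'"
      using common_nbrs_loopless[OF assms(4) c(1)] by (auto simp: doubleton_eq_iff)
  qed
  ultimately show ?thesis
    using finite_common_nbrs[OF assms(1)]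
    by (simp add: triangles_insert_edge[OF assms(3,4)] card_Un_disjoint card_image)
qed

lemma eta_Suc: "eta M (Suc t) = max 1 (real t * (real t - 1) / (real M * (real M - 1)))"
  unfolding eta_def by (simp add: algebra_simps)

lemma eta_Suc_eq_1: "t \<le> M \<Longrightarrow> eta M (Suc t) = 1"
proof -
  assume "t \<le> M"
  have real_pronic: "real (n * (n - 1)) = real n * (real n - 1)" for n
    by (cases n) (auto simp: algebra_simps)
  have "t * (t - 1) \<le> M * (M - 1)" using \<open>t \<le> M\<close> by (intro mult_le_mono) auto
  then have "real t * (real t - 1) \<le> real M * (real M - 1)" by (metis of_nat_le_iff real_pronic)
  moreover have "0 \<le> real M * (real M - 1)" by (metis of_nat_0_le_iff real_pronic)
  ultimately have "real t * (real t - 1) / (real M * (real M - 1)) \<le> 1"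
    by (auto simp: divide_le_eq_1)
  then show ?thesis unfolding eta_Suc by simp
qed

lemma eta_Suc_mult_choose_two_ratio:
  assumes "2 \<le> t" "2 \<le> M"
  shows "eta M (Suc t) * (real (min M t choose 2) / real (t choose 2)) = 1"
proof (cases "t \<le> M")
  case True
  have "(t choose 2) > 0" using assms(1) by simp
  then show ?thesis using eta_Suc_eq_1[OF True] True by simp
next
  case False
  have M: "real M * (real M - 1) > 0" and t: "real t * (real t - 1) > 0" using assms by simp_all
  have "real M * (real M - 1) < real t * (real t - 1)"
    using False assms by (intro mult_strict_mono) auto
  then have "eta M (Suc t) = real t * (real t - 1) / (real M * (real M - 1))"
    using M unfolding eta_Suc by simp
  then show ?thesis using False M t assms by (simp add: real_choose_two min_def)
qed

lemma edges_upto_Suc: "edges_upto e (Suc t) = insert (edge_at e (Suc t)) (edges_upto e t)"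
  unfolding edges_upto_def by (simp add: atLeastAtMostSuc_conv)

lemma valid_stream_inj_on: "valid_stream e \<Longrightarrow> inj_on (edge_at e) {1..t}"
  unfolding valid_stream_def by (intro linorder_inj_onI') auto

lemma valid_stream_loopless: "valid_stream e \<Longrightarrow> {a} \<notin> edges_upto e t"
  unfolding valid_stream_def edges_upto_def edge_at_def by (auto simp: doubleton_eq_iff)

lemma card_triangles_edges_upto_Suc:
  assumes "valid_stream e"
  shows "card (triangles (edges_upto e (Suc t))) = card (triangles (edges_upto e t))
           + card (common_nbrs (edges_upto e t) (fst (e (Suc t))) (snd (e (Suc t))))"
proof -
  have "edge_at e (Suc t) \<notin> edges_upto e t"
    using inj_on_last_notin_image[OF valid_stream_inj_on[OF assms]] by (simp add: edges_upto_def)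
  then have new: "{fst (e (Suc t)), snd (e (Suc t))} \<notin> edges_upto e t" by (simp add: edge_at_def)
  have "fst (e (Suc t)) \<noteq> snd (e (Suc t))" using assms by (simp add: valid_stream_def)
  moreover have "edges_upto e (Suc t) = insert {fst (e (Suc t)), snd (e (Suc t))} (edges_upto e t)"
    by (simp add: edges_upto_Suc edge_at_def)
  moreover have "finite (edges_upto e t)" by (simp add: edges_upto_def)
  ultimately show ?thesis
    using card_triangles_insert_edge[OF _ new _ valid_stream_loopless[OF assms]] by simp
qed

lemma map_fst_triest_impr: "map_pmf fst (triest_impr M e t) = reservoir_sample M (edge_at e) t"
proof (induction t)
  case 0
  then show ?case by simp
next
  case (Suc t)
  have "map_pmf fst (triest_impr M e (Suc t))
      = triest_impr M e t \<bind> (\<lambda>st. reservoir M (Suc t) (edge_at e (Suc t)) (fst st))"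
    by (simp add: map_bind_pmf triest_step_def Let_def map_pmf_comp edge_at_def)
  also have "\<dots> = map_pmf fst (triest_impr M e t) \<bind> reservoir M (Suc t) (edge_at e (Suc t))"
    by (simp add: bind_map_pmf)
  finally show ?case by (simp add: Suc.IH)
qed

lemma map_snd_triest_impr_Suc:
  "map_pmf snd (triest_impr M e (Suc t)) = map_pmf
     (\<lambda>st. snd st + eta M (Suc t)
        * real (card (common_nbrs (fst st) (fst (e (Suc t))) (snd (e (Suc t))))))
     (triest_impr M e t)"
proof -
  have "map_pmf snd (triest_impr M e (Suc t)) = triest_impr M e t \<bind> (\<lambda>st. return_pmf
     (snd st + eta M (Suc t)
        * real (card (common_nbrs (fst st) (fst (e (Suc t))) (snd (e (Suc t)))))))"
    by (simp add: map_bind_pmf triest_step_def Let_def map_pmf_comp)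
  then show ?thesis by (simp add: map_pmf_def)
qed

lemma finite_set_pmf_triest_impr: "finite (set_pmf (triest_impr M e t))"
proof (induction t)
  case 0
  then show ?case by simp
next
  case (Suc t)
  have "finite (fst ` set_pmf (triest_impr M e (Suc t)))"
    by (simp only: set_map_pmf[symmetric] map_fst_triest_impr finite_set_pmf_reservoir_sample)
  moreover have "finite (snd ` set_pmf (triest_impr M e (Suc t)))"
    using Suc.IH by (simp only: set_map_pmf[symmetric] map_snd_triest_impr_Suc) simp
  ultimately show ?case by (rule finite_subset[OF subset_fst_snd finite_cartesian_product])
qed

lemma eta_mult_expectation_card_common_nbrs:
  fixes e :: "nat \<Rightarrow> 'a \<times> 'a" and M t :: nat
  assumes "valid_stream e" "2 \<le> M"
  defines "u \<equiv> fst (e (Suc t))" and "v \<equiv> snd (e (Suc t))"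
  shows "eta M (Suc t) * measure_pmf.expectation (reservoir_sample M (edge_at e) t)
           (\<lambda>S. real (card (common_nbrs S u v)))
       = real (card (common_nbrs (edges_upto e t) u v))"
proof -
  let ?C = "common_nbrs (edges_upto e t) u v"
  have "u \<noteq> v" using assms(1) by (simp add: valid_stream_def u_def v_def)
  have E: "measure_pmf.expectation (reservoir_sample M (edge_at e) t)
      (\<lambda>S. real (card (common_nbrs S u v)))
      = real (card ?C) * (real (min M t choose 2) / real (t choose 2))"
    using expectation_card_common_nbrs_reservoir_sample[OF _ valid_stream_inj_on[OF assms(1)]]
      \<open>u \<noteq> v\<close> assms(2)
    by (simp add: edges_upto_def)
  show ?thesis
  proof (cases "?C = {}")
    case False
    then obtain c where "{{c, u}, {c, v}} \<subseteq> edges_upto e t" by (auto simp: common_nbrs_def)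
    moreover have "card {{c, u}, {c, v}} = 2" using \<open>u \<noteq> v\<close> by (auto simp: doubleton_eq_iff)
    moreover have "finite (edges_upto e t)" by (simp add: edges_upto_def)
    ultimately have "2 \<le> card (edges_upto e t)" by (metis card_mono)
    then have "2 \<le> t" using card_image_le[of "{1..t}" "edge_at e"] by (simp add: edges_upto_def)
    then have "eta M (Suc t) * (real (min M t choose 2) / real (t choose 2)) = 1"
      using assms(2) by (rule eta_Suc_mult_choose_two_ratio)
    then show ?thesis unfolding E mult.left_commute[of "eta M (Suc t)"] by (simp only: mult_1_right)
  qed (simp add: E)
qed

lemma expectation_triest_impr:
  assumes "valid_stream e" "2 \<le> M"
  shows "measure_pmf.expectation (triest_impr M e t) snd = real (card (triangles (edges_upto e t)))"
proof (induction t)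
  case 0
  then show ?case by (simp add: edges_upto_def triangles_empty)
next
  case (Suc t)
  let ?u = "fst (e (Suc t))" and ?v = "snd (e (Suc t))"
  have int: "integrable (measure_pmf (triest_impr M e t)) f" for f :: "_ \<Rightarrow> real"
    by (rule integrable_measure_pmf_finite[OF finite_set_pmf_triest_impr])
  have "measure_pmf.expectation (triest_impr M e (Suc t)) snd
      = measure_pmf.expectation (map_pmf snd (triest_impr M e (Suc t))) (\<lambda>x. x)"
    by (simp only: integral_map_pmf)
  also have "\<dots> = measure_pmf.expectation (triest_impr M e t)
      (\<lambda>st. snd st + eta M (Suc t) * real (card (common_nbrs (fst st) ?u ?v)))"
    unfolding map_snd_triest_impr_Suc by (simp only: integral_map_pmf)
  also have "\<dots> = measure_pmf.expectation (triest_impr M e t) snd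
      + eta M (Suc t) * measure_pmf.expectation (triest_impr M e t)
          (\<lambda>st. real (card (common_nbrs (fst st) ?u ?v)))"
    by (subst Bochner_Integration.integral_add[OF int int]) simp
  also have "\<dots> = measure_pmf.expectation (triest_impr M e t) snd
      + eta M (Suc t) * measure_pmf.expectation (map_pmf fst (triest_impr M e t))
          (\<lambda>S. real (card (common_nbrs S ?u ?v)))"
    by (simp only: integral_map_pmf)
  also have "\<dots> = real (card (triangles (edges_upto e t)))
      + real (card (common_nbrs (edges_upto e t) ?u ?v))"
    unfolding Suc.IH map_fst_triest_impr eta_mult_expectation_card_common_nbrs[OF assms] ..
  also have "\<dots> = real (card (triangles (edges_upto e (Suc t))))"
    unfolding card_triangles_edges_upto_Suc[OF assms(1)] by (simp only: of_nat_add)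
  finally show ?case .
qed

lemma triest_impr_exact:
  assumes "valid_stream e" "t \<le> M" "st \<in> set_pmf (triest_impr M e t)"
  shows "snd st = real (card (triangles (edges_upto e t)))"
  using assms(2,3)
proof (induction t arbitrary: st)
  case 0
  then show ?case by (simp add: edges_upto_def triangles_empty)
next
  case (Suc t)
  have "snd st \<in> set_pmf (map_pmf snd (triest_impr M e (Suc t)))"
    unfolding set_map_pmf using Suc.prems(2) by (rule imageI)
  then obtain st0 where st0: "st0 \<in> set_pmf (triest_impr M e t)" and
    snd_st: "snd st = snd st0 + eta M (Suc t)
      * real (card (common_nbrs (fst st0) (fst (e (Suc t))) (snd (e (Suc t)))))"
    unfolding map_snd_triest_impr_Suc by auto
  have "fst st0 \<in> set_pmf (map_pmf fst (triest_impr M e t))"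
    unfolding set_map_pmf using st0 by (rule imageI)
  then have "fst st0 = edges_upto e t"
    using Suc.prems(1) by (simp add: map_fst_triest_impr reservoir_sample_le edges_upto_def)
  then show ?case
    using snd_st Suc.IH[OF _ st0] Suc.prems(1) eta_Suc_eq_1[of t M]
    by (simp add: card_triangles_edges_upto_Suc[OF assms(1)])
qed

theorem theorem4p12:
  fixes M :: nat and e :: "nat \<Rightarrow> 'a \<times> 'a" and t :: nat
  assumes "M \<ge> 6" and "valid_stream e" and "t \<ge> 1"
  shows "(t \<le> M \<longrightarrow> (\<forall>st \<in> set_pmf (triest_impr M e t).
              snd st = real (card (triangles (edges_upto e t)))))
       \<and> (t > M \<longrightarrow> measure_pmf.expectation (triest_impr M e t) snd
              = real (card (triangles (edges_upto e t))))"
  using triest_impr_exact[OF assms(2)] expectation_triest_impr[OF assms(2)] assms(1) by simp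

end
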